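(* Let $K$ be a finite field, $G$ a finite group of order $m$ with a fixed ordering of its elements, $\varphi:KG\to K^m$ the associated coordinate isomorphism, and $KG=\mathcal{B}_0\oplus\cdots\oplus\mathcal{B}_s$ the block decomposition with $\mathcal{B}_i=f_iKG$. For each $i$ let $\pi_i:\mathcal{B}_i\to K^m$ be the restriction of $\varphi$ to $\mathcal{B}_i$. Let $\ell\ge1$, let $\mathcal{C}$ be a right $KG$-submodule of $KG^\ell$, identified with a linear code in $K^{m\ell}$ via $\varphi^\ell$, and let $\mathcal{C}_i=\mathcal{C}f_i\subseteq\mathcal{B}_i^\ell$. (a) Then $$\mathcal{C}=(\mathcal{B}_0\,\Box_{\pi_0}\,\mathcal{C}_0)\oplus\cdots\oplus(\mathcal{B}_s\,\Box_{\pi_s}\,\mathcal{C}_s),$$ where each $\mathcal{C}_i$ is a (possibly zero) linear code of length $\ell$ over the ring $\mathcal{B}_i$. (b) Suppose the blocks are ordered so that $\mathrm{d}(\mathcal{B}_0)\le\cdots\le\mathrm{d}(\mathcal{B}_s)$ and $\mathcal{C}\neq0$. Then $$\mathrm{d}(\mathcal{C})\ \ge\ \min_{0\le i\le s}\bigl\{\mathrm{d}(\mathcal{C}_i)\cdot \mathrm{d}(\mathcal{B}_0\oplus\cdots\oplus\mathcal{B}_i)\bigr\},$$ with the convention $\mathrm{d}(\mathcal{C}_i)=\infty$ if $\mathcal{C}_i=0$.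
   Context: For a ring $\mathcal{B}_i$, a $K$-linear injection $\pi_i:\mathcal{B}_i\to K^m$ and a subset $\mathcal{C}_i\subseteq\mathcal{B}_i^\ell$, the concatenated code is $\mathcal{B}_i\,\Box_{\pi_i}\,\mathcal{C}_i=\{(\pi_i(c_1),\ldots,\pi_i(c_\ell)) : (c_1,\ldots,c_\ell)\in\mathcal{C}_i\}\subseteq K^{m\ell}$. The Hamming weight of $v\in K^N$ is the number of nonzero coordinates; the minimum distance $\mathrm{d}$ of a $K$-subspace of $K^N$ (or of a subspace of $KG$, via $\varphi$) is the minimum weight of its nonzero elements. For a code $\mathcal{C}_i\subseteq\mathcal{B}_i^\ell$, $\mathrm{d}(\mathcal{C}_i)$ is the minimum, over nonzero $(c_1,\ldots,c_\ell)\in\mathcal{C}_i$, of the number of indices $j$ with $c_j\ne0$. The blocks $\mathcal{B}_i=f_iKG$ come from the primitive pairwise orthogonal central idempotents $f_0,\ldots,f_s$ of $KG$ with $\sum f_i=1$; $\mathcal{B}_0\oplus\cdots\oplus\mathcal{B}_i$ is regarded as a $K$-subspace of $KG\cong K^m$. *)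

theory Defs
  imports "HOL-Algebra.Group" "HOL-Library.Extended_Nat"
begin

definition grp_alg :: "('g, 'b) monoid_scheme \<Rightarrow> ('g \<Rightarrow> 'k::field) set" where
  "grp_alg G = {a. \<forall>x. x \<notin> carrier G \<longrightarrow> a x = 0}"

definition ga_zero :: "'g \<Rightarrow> 'k::field" where
  "ga_zero = (\<lambda>x. 0)"

definition ga_one :: "('g, 'b) monoid_scheme \<Rightarrow> 'g \<Rightarrow> 'k::field" where
  "ga_one G = (\<lambda>x. if x = \<one>\<^bsub>G\<^esub> then 1 else 0)"

definition ga_add :: "('g \<Rightarrow> 'k::field) \<Rightarrow> ('g \<Rightarrow> 'k) \<Rightarrow> 'g \<Rightarrow> 'k" where
  "ga_add a b = (\<lambda>x. a x + b x)"

definition ga_mult :: "('g, 'b) monoid_scheme \<Rightarrow> ('g \<Rightarrow> 'k::field) \<Rightarrow> ('g \<Rightarrow> 'k) \<Rightarrow> 'g \<Rightarrow> 'k" where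
  "ga_mult G a b = (\<lambda>x. if x \<in> carrier G
      then (\<Sum>y\<in>carrier G. a y * b (inv\<^bsub>G\<^esub> y \<otimes>\<^bsub>G\<^esub> x)) else 0)"

definition central_idem :: "('g, 'b) monoid_scheme \<Rightarrow> ('g \<Rightarrow> 'k::field) \<Rightarrow> bool" where
  "central_idem G e \<longleftrightarrow> e \<in> grp_alg G \<and> ga_mult G e e = e \<and>
     (\<forall>a\<in>grp_alg G. ga_mult G e a = ga_mult G a e)"

definition primitive_central_idem :: "('g, 'b) monoid_scheme \<Rightarrow> ('g \<Rightarrow> 'k::field) \<Rightarrow> bool" where
  "primitive_central_idem G e \<longleftrightarrow> central_idem G e \<and> e \<noteq> ga_zero \<and>
     (\<forall>e1 e2. central_idem G e1 \<and> central_idem G e2 \<and> ga_mult G e1 e2 = ga_zero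
        \<and> e = ga_add e1 e2 \<longrightarrow> e1 = ga_zero \<or> e2 = ga_zero)"

definition block :: "('g, 'b) monoid_scheme \<Rightarrow> ('g \<Rightarrow> 'k::field) \<Rightarrow> ('g \<Rightarrow> 'k) set" where
  "block G f = {ga_mult G f a | a. a \<in> grp_alg G}"

definition block_sum :: "('g, 'b) monoid_scheme \<Rightarrow> (nat \<Rightarrow> 'g \<Rightarrow> 'k::field) \<Rightarrow> nat \<Rightarrow> ('g \<Rightarrow> 'k) set" where
  "block_sum G f i = {(\<lambda>x. \<Sum>j\<le>i. b j x) | b. \<forall>j\<le>i. b j \<in> block G (f j)}"

text \<open>Vectors of K^N are encoded as functions nat => 'k vanishing at positions >= N.\<close>
definition kvec :: "nat \<Rightarrow> (nat \<Rightarrow> 'k::zero) set" where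
  "kvec N = {v. \<forall>p\<ge>N. v p = 0}"

text \<open>Coordinate map phi : KG -> K^m for the ordering e of the group elements
  (e k is the k-th element, k < m).\<close>
definition phi :: "nat \<Rightarrow> (nat \<Rightarrow> 'g) \<Rightarrow> ('g \<Rightarrow> 'k::zero) \<Rightarrow> nat \<Rightarrow> 'k" where
  "phi m e a = (\<lambda>k. if k < m then a (e k) else 0)"

definition tuples :: "nat \<Rightarrow> ('g \<Rightarrow> 'k::zero) set \<Rightarrow> (nat \<Rightarrow> 'g \<Rightarrow> 'k) set" where
  "tuples l R = {c. (\<forall>j<l. c j \<in> R) \<and> (\<forall>j\<ge>l. c j = (\<lambda>x. 0))}"

definition tup_zero :: "nat \<Rightarrow> 'g \<Rightarrow> 'k::zero" where
  "tup_zero = (\<lambda>j x. 0)"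

definition tup_add :: "(nat \<Rightarrow> 'g \<Rightarrow> 'k::field) \<Rightarrow> (nat \<Rightarrow> 'g \<Rightarrow> 'k) \<Rightarrow> nat \<Rightarrow> 'g \<Rightarrow> 'k" where
  "tup_add c c' = (\<lambda>j. ga_add (c j) (c' j))"

definition tup_rmult :: "('g, 'b) monoid_scheme \<Rightarrow> (nat \<Rightarrow> 'g \<Rightarrow> 'k::field) \<Rightarrow> ('g \<Rightarrow> 'k) \<Rightarrow> nat \<Rightarrow> 'g \<Rightarrow> 'k" where
  "tup_rmult G c a = (\<lambda>j. ga_mult G (c j) a)"

definition right_submodule :: "('g, 'b) monoid_scheme \<Rightarrow> nat \<Rightarrow> ('g \<Rightarrow> 'k::field) set
    \<Rightarrow> ('g \<Rightarrow> 'k) set \<Rightarrow> (nat \<Rightarrow> 'g \<Rightarrow> 'k) set \<Rightarrow> bool" where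
  "right_submodule G l R S C \<longleftrightarrow> C \<subseteq> tuples l R \<and> tup_zero \<in> C \<and>
     (\<forall>c\<in>C. \<forall>c'\<in>C. tup_add c c' \<in> C) \<and> (\<forall>c\<in>C. \<forall>a\<in>S. tup_rmult G c a \<in> C)"

text \<open>Concatenated code  B box_pi C  = {(pi(c_1),...,pi(c_l)) | c in C} in K^(m l).\<close>
definition concat_code :: "nat \<Rightarrow> nat \<Rightarrow> (('g \<Rightarrow> 'k::zero) \<Rightarrow> nat \<Rightarrow> 'k)
    \<Rightarrow> (nat \<Rightarrow> 'g \<Rightarrow> 'k) set \<Rightarrow> (nat \<Rightarrow> 'k) set" where
  "concat_code m l \<pi> C =
     {(\<lambda>p. if p < m * l then \<pi> (c (p div m)) (p mod m) else 0) | c. c \<in> C}"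

definition phi_l :: "nat \<Rightarrow> (nat \<Rightarrow> 'g) \<Rightarrow> nat \<Rightarrow> (nat \<Rightarrow> 'g \<Rightarrow> 'k::zero) \<Rightarrow> nat \<Rightarrow> 'k" where
  "phi_l m e l c = (\<lambda>p. if p < m * l then phi m e (c (p div m)) (p mod m) else 0)"

definition is_direct_sum :: "(nat \<Rightarrow> 'k::field) set \<Rightarrow> nat \<Rightarrow> (nat \<Rightarrow> (nat \<Rightarrow> 'k) set) \<Rightarrow> bool" where
  "is_direct_sum V s W \<longleftrightarrow>
     V = {(\<lambda>p. \<Sum>i\<le>s. w i p) | w. \<forall>i\<le>s. w i \<in> W i} \<and>
     (\<forall>w w'. (\<forall>i\<le>s. w i \<in> W i \<and> w' i \<in> W i) \<and>
        (\<lambda>p. \<Sum>i\<le>s. w i p) = (\<lambda>p. \<Sum>i\<le>s. w' i p) \<longrightarrow> (\<forall>i\<le>s. w i = w' i))"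

text \<open>Hamming weight and minimum distance of a subset of K^N (infinity if no nonzero element).\<close>
definition hweight :: "(nat \<Rightarrow> 'k::zero) \<Rightarrow> nat" where
  "hweight v = card {p. v p \<noteq> 0}"

definition min_dist :: "(nat \<Rightarrow> 'k::zero) set \<Rightarrow> enat" where
  "min_dist V = (INF v\<in>V - {(\<lambda>p. 0)}. enat (hweight v))"

text \<open>Minimum distance of a code C contained in R^l over a ring R
  (number of nonzero components; infinity if C = 0).\<close>
definition ring_code_dist :: "nat \<Rightarrow> (nat \<Rightarrow> 'g \<Rightarrow> 'k::zero) set \<Rightarrow> enat" where
  "ring_code_dist l C = (INF c\<in>C - {tup_zero}. enat (card {j. j < l \<and> c j \<noteq> (\<lambda>x. 0)}))"

end

theory Submission
  imports Defs
begin

text \<open>The central idempotents split every \<open>a \<in> KG\<close> as \<open>a = \<Sum>\<^sub>i a f\<^sub>i\<close> with \<open>a f\<^sub>i \<in> \<B>\<^sub>i\<close>,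
  and multiplying by \<open>f\<^sub>i\<close> recovers the \<open>i\<close>-th summand; applied coordinatewise to a codeword \<open>c\<close>
  this gives (a). For (b), let \<open>i\<close> be the largest index with \<open>c f\<^sub>i \<noteq> 0\<close>. Then every coordinate
  of \<open>c\<close> lies in \<open>\<B>\<^sub>0 \<oplus> \<dots> \<oplus> \<B>\<^sub>i\<close>, and at least \<open>d(\<C>\<^sub>i)\<close> coordinates of \<open>c f\<^sub>i\<close>,
  hence of \<open>c\<close>, are nonzero; each of them contributes at least \<open>d(\<B>\<^sub>0 \<oplus> \<dots> \<oplus> \<B>\<^sub>i)\<close> to the
  Hamming weight of \<open>\<phi>\<^sup>l(c)\<close>.\<close>

lemma ga_mult_in_grp_alg: "ga_mult G a b \<in> grp_alg G"
  by (simp add: ga_mult_def grp_alg_def)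

lemma ga_mult_sum_right:
  "ga_mult G a (\<lambda>x. \<Sum>i\<in>I. b i x) = (\<lambda>x. \<Sum>i\<in>I. ga_mult G a (b i) x)"
  unfolding ga_mult_def sum_distrib_left by (simp add: fun_eq_iff sum.swap[of _ I])

lemma ga_mult_sum_left:
  "ga_mult G (\<lambda>x. \<Sum>i\<in>I. b i x) a = (\<lambda>x. \<Sum>i\<in>I. ga_mult G (b i) a x)"
  unfolding ga_mult_def sum_distrib_right by (simp add: fun_eq_iff sum.swap[of _ I])

lemma ga_mult_zero_left [simp]: "ga_mult G (\<lambda>x. 0) a = (\<lambda>x. 0)"
  by (simp add: ga_mult_def fun_eq_iff)

lemma ga_mult_zero_right [simp]: "ga_mult G a (\<lambda>x. 0) = (\<lambda>x. 0)"
  by (simp add: ga_mult_def fun_eq_iff)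

lemma ga_mult_add_left:
  "ga_mult G (ga_add a b) c = ga_add (ga_mult G a c) (ga_mult G b c)"
  by (auto simp: ga_mult_def ga_add_def distrib_right sum.distrib)

lemma (in group) bij_betw_mult_left:
  assumes "z \<in> carrier G"
  shows "bij_betw ((\<otimes>) z) (carrier G) (carrier G)"
proof (rule bij_betwI[where g="(\<otimes>) (inv z)"])
  fix x assume "x \<in> carrier G"
  then show "inv z \<otimes> (z \<otimes> x) = x" "z \<otimes> (inv z \<otimes> x) = x"
    using assms by (simp_all flip: m_assoc)
qed (use assms in auto)

lemma (in group) ga_mult_assoc:
  "ga_mult G (ga_mult G a b) c = ga_mult G a (ga_mult G b c)"
proof
  fix x
  show "ga_mult G (ga_mult G a b) c x = ga_mult G a (ga_mult G b c) x"
  proof (cases "x \<in> carrier G")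
    case False then show ?thesis by (simp add: ga_mult_def)
  next
    case x: True
    have "ga_mult G (ga_mult G a b) c x
        = (\<Sum>y\<in>carrier G. (\<Sum>z\<in>carrier G. a z * b (inv z \<otimes> y)) * c (inv y \<otimes> x))"
      using x by (simp add: ga_mult_def)
    also have "\<dots> = (\<Sum>z\<in>carrier G. \<Sum>y\<in>carrier G. a z * b (inv z \<otimes> y) * c (inv y \<otimes> x))"
      unfolding sum_distrib_right by (rule sum.swap)
    also have "\<dots> = (\<Sum>z\<in>carrier G. \<Sum>w\<in>carrier G. a z * b w * c (inv w \<otimes> (inv z \<otimes> x)))"
    proof (rule sum.cong[OF refl])
      fix z assume z: "z \<in> carrier G"
      have "(\<Sum>y\<in>carrier G. a z * b (inv z \<otimes> y) * c (inv y \<otimes> x))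
          = (\<Sum>w\<in>carrier G. a z * b (inv z \<otimes> (z \<otimes> w)) * c (inv (z \<otimes> w) \<otimes> x))"
        using sum.reindex_bij_betw[OF bij_betw_mult_left[OF z],
            of "\<lambda>y. a z * b (inv z \<otimes> y) * c (inv y \<otimes> x)"] by simp
      also have "\<dots> = (\<Sum>w\<in>carrier G. a z * b w * c (inv w \<otimes> (inv z \<otimes> x)))"
        using z x by (intro sum.cong) (simp_all add: inv_mult_group m_assoc flip: m_assoc[of "inv z"])
      finally show "(\<Sum>y\<in>carrier G. a z * b (inv z \<otimes> y) * c (inv y \<otimes> x))
          = (\<Sum>w\<in>carrier G. a z * b w * c (inv w \<otimes> (inv z \<otimes> x)))" .
    qed
    also have "\<dots> = ga_mult G a (ga_mult G b c) x"
      using x by (simp add: ga_mult_def sum_distrib_left mult.assoc)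
    finally show ?thesis .
  qed
qed

lemma (in group) ga_mult_one_right:
  assumes "finite (carrier G)" "a \<in> grp_alg G"
  shows "ga_mult G a (ga_one G) = a"
proof
  fix x
  show "ga_mult G a (ga_one G) x = a x"
  proof (cases "x \<in> carrier G")
    case False then show ?thesis using assms(2) by (simp add: ga_mult_def grp_alg_def)
  next
    case x: True
    have "y \<in> carrier G \<Longrightarrow> inv y \<otimes> x = \<one> \<longleftrightarrow> y = x" for y
      using x by (metis inv_closed inv_inv l_inv inv_equality)
    then have "ga_mult G a (ga_one G) x = (\<Sum>y\<in>carrier G. if y = x then a y else 0)"
      using x by (auto simp: ga_mult_def ga_one_def intro!: sum.cong)
    also have "\<dots> = a x" using x assms(1) by simp
    finally show ?thesis .
  qed
qed

lemma right_submodule_sum_closed: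
  assumes "right_submodule G l R S C" "finite I" "\<And>i. i \<in> I \<Longrightarrow> t i \<in> C"
  shows "(\<lambda>j x. \<Sum>i\<in>I. t i j x) \<in> C"
  using assms(2,3)
proof (induction I rule: finite_induct)
  case empty then show ?case using assms(1) by (simp add: right_submodule_def tup_zero_def)
next
  case (insert i I)
  have "(\<lambda>j x. \<Sum>i\<in>insert i I. t i j x) = tup_add (t i) (\<lambda>j x. \<Sum>i\<in>I. t i j x)"
    using insert.hyps by (simp add: tup_add_def ga_add_def fun_eq_iff)
  then show ?case using insert assms(1) unfolding right_submodule_def by simp
qed

lemma block_index_less:
  fixes j k l m :: nat
  assumes "j < l" "k < m"
  shows "j * m + k < m * l"
proof -
  have "j * m + k < (j + 1) * m" using assms(2) by simp
  also have "\<dots> \<le> l * m" using assms(1) by (intro mult_right_mono) auto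
  finally show ?thesis by (simp add: mult.commute)
qed

lemma phi_l_sum:
  "phi_l m e l (\<lambda>j x. \<Sum>i\<in>I. t i j x) = (\<lambda>p. \<Sum>i\<in>I. phi_l m e l (t i) p)"
  by (auto simp: phi_l_def phi_def fun_eq_iff)

lemma phi_l_cong:
  assumes "\<And>j. j < l \<Longrightarrow> a j = b j"
  shows "phi_l m e l a = phi_l m e l b"
proof
  fix p
  show "phi_l m e l a p = phi_l m e l b p"
  proof (cases "p < m * l")
    case True
    then have "p div m < l" by (simp add: less_mult_imp_div_less mult.commute)
    then show ?thesis using True assms by (simp add: phi_l_def)
  qed (simp add: phi_l_def)
qed

lemma phi_l_eqD:
  assumes e: "bij_betw e {..<m} (carrier G)"
    and a: "a j \<in> grp_alg G" and b: "b j \<in> grp_alg G"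
    and eq: "phi_l m e l a = phi_l m e l b" and j: "j < l"
  shows "a j = b j"
proof
  fix x
  show "a j x = b j x"
  proof (cases "x \<in> carrier G")
    case False then show ?thesis using a b by (simp add: grp_alg_def)
  next
    case True
    then obtain k where k: "k < m" "x = e k"
      using e by (metis bij_betw_iff_bijections lessThan_iff)
    have "phi_l m e l a (j * m + k) = phi_l m e l b (j * m + k)" using eq by simp
    then show ?thesis using k block_index_less[OF j k(1)] by (simp add: phi_l_def phi_def)
  qed
qed

lemma concat_code_phi: "concat_code m l (phi m e) X = phi_l m e l ` X"
  by (auto simp: concat_code_def phi_l_def)

lemma phi_nonzero:
  assumes e: "bij_betw e {..<m} (carrier G)" and "a \<in> grp_alg G" "a \<noteq> (\<lambda>x. 0)"
  shows "phi m e a \<noteq> (\<lambda>k. 0)"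
proof -
  obtain x where x: "a x \<noteq> 0" using assms(3) by auto
  then have "x \<in> carrier G" using assms(2) by (auto simp: grp_alg_def)
  then obtain k where "k < m" "x = e k" using e by (metis bij_betw_iff_bijections lessThan_iff)
  then show ?thesis using x by (auto simp: phi_def fun_eq_iff)
qed

lemma hweight_phi_l: "hweight (phi_l m e l c) = (\<Sum>j<l. hweight (phi m e (c j)))"
proof -
  define S where "S j = {k. phi m e (c j) k \<noteq> 0}" for j
  have S_less: "k \<in> S j \<Longrightarrow> k < m" for j k by (auto simp: S_def phi_def split: if_splits)
  \<comment> \<open>coordinate \<open>j * m + k\<close> of \<open>phi_l\<close> is coordinate \<open>k\<close> of the \<open>j\<close>-th block\<close>
  have support: "{p. phi_l m e l c p \<noteq> 0} = (\<lambda>(j, k). j * m + k) ` (SIGMA j:{..<l}. S j)"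
  proof (intro equalityI subsetI)
    fix p assume "p \<in> {p. phi_l m e l c p \<noteq> 0}"
    then have p: "p < m * l" "p mod m \<in> S (p div m)"
      unfolding phi_l_def S_def by (simp_all split: if_splits)
    then have "p div m < l" by (simp add: less_mult_imp_div_less mult.commute)
    then have mem: "(p div m, p mod m) \<in> (SIGMA j:{..<l}. S j)" using p(2) by simp
    show "p \<in> (\<lambda>(j, k). j * m + k) ` (SIGMA j:{..<l}. S j)" by (rule image_eqI[OF _ mem]) simp
  next
    fix p assume "p \<in> (\<lambda>(j, k). j * m + k) ` (SIGMA j:{..<l}. S j)"
    then obtain j k where jk: "j < l" "k \<in> S j" and p: "p = j * m + k" by auto
    have "k < m" using jk(2) by (rule S_less)
    then have "p div m = j" "p mod m = k" "p < m * l"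
      using p block_index_less[OF jk(1)] by auto
    then show "p \<in> {p. phi_l m e l c p \<noteq> 0}" using jk(2) by (simp add: phi_l_def S_def)
  qed
  have "inj_on (\<lambda>(j, k). j * m + k) (SIGMA j:{..<l}. S j)"
  proof (rule inj_onI, clarsimp)
    fix j k j' k' assume jk: "k \<in> S j" "k' \<in> S j'" and eq: "j * m + k = j' * m + k'"
    have "k < m" "k' < m" using S_less jk by auto
    then have "(j * m + k) div m = j" "(j' * m + k') div m = j'" by auto
    then have "j = j'" using eq by metis
    then show "j = j' \<and> k = k'" using eq by simp
  qed
  then have "card {p. phi_l m e l c p \<noteq> 0} = card (SIGMA j:{..<l}. S j)"
    unfolding support by (rule card_image)
  also have "\<dots> = (\<Sum>j<l. card (S j))"
  proof (rule card_SigmaI)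
    show "\<forall>j\<in>{..<l}. finite (S j)"
      using S_less by (blast intro: finite_subset[of _ "{..<m}"])
  qed simp
  finally show ?thesis by (simp add: hweight_def S_def)
qed

lemma min_dist_le_hweight:
  assumes "v \<in> V" "v \<noteq> (\<lambda>p. 0)"
  shows "min_dist V \<le> enat (hweight v)"
  unfolding min_dist_def by (rule INF_lower) (use assms in blast)

lemma ring_code_dist_le:
  assumes "c \<in> D" "c \<noteq> tup_zero"
  shows "ring_code_dist l D \<le> enat (card {j. j < l \<and> c j \<noteq> (\<lambda>x. 0)})"
  unfolding ring_code_dist_def by (rule INF_lower) (use assms in blast)

lemma enat_card_mult_le_sum:
  assumes "finite J" "\<And>j. j \<in> J \<Longrightarrow> d \<le> enat (w j)"
  shows "enat (card J) * d \<le> enat (\<Sum>j\<in>J. w j)"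
proof (cases d)
  case (enat d')
  have "card J * d' = (\<Sum>j\<in>J. d')" by simp
  also have "\<dots> \<le> (\<Sum>j\<in>J. w j)" using assms(2) enat by (intro sum_mono) auto
  finally show ?thesis using enat by simp
next
  case infinity
  then have "J = {}" using assms(2) by blast
  then show ?thesis by (simp add: zero_enat_def[symmetric])
qed

locale central_idempotent_decomposition = group G for G :: "('g, 'b) monoid_scheme" (structure) +
  fixes f :: "nat \<Rightarrow> 'g \<Rightarrow> 'k::field" and s :: nat
  assumes finite_carrier: "finite (carrier G)"
    and central: "i \<le> s \<Longrightarrow> central_idem G (f i)"
    and orthogonal: "i \<le> s \<Longrightarrow> j \<le> s \<Longrightarrow> i \<noteq> j \<Longrightarrow> ga_mult G (f i) (f j) = ga_zero"
    and sum_eq_one: "(\<lambda>x. \<Sum>i\<le>s. f i x) = ga_one G"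
begin

lemma idem_in_grp_alg: "i \<le> s \<Longrightarrow> f i \<in> grp_alg G"
  using central unfolding central_idem_def by blast

lemma idem_idem: "i \<le> s \<Longrightarrow> ga_mult G (f i) (f i) = f i"
  using central unfolding central_idem_def by blast

lemma idem_commute: "i \<le> s \<Longrightarrow> a \<in> grp_alg G \<Longrightarrow> ga_mult G (f i) a = ga_mult G a (f i)"
  using central unfolding central_idem_def by blast

lemma grp_alg_decomp:
  assumes "a \<in> grp_alg G"
  shows "a = (\<lambda>x. \<Sum>i\<le>s. ga_mult G a (f i) x)"
proof -
  have "a = ga_mult G a (ga_one G)" using ga_mult_one_right[OF finite_carrier assms] by simp
  also have "\<dots> = (\<lambda>x. \<Sum>i\<le>s. ga_mult G a (f i) x)" by (simp flip: sum_eq_one add: ga_mult_sum_right)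
  finally show ?thesis .
qed

lemma mult_idem_decomp:
  assumes "i \<le> s"
  shows "ga_mult G (\<lambda>x. \<Sum>k\<le>s. ga_mult G (a k) (f k) x) (f i) = ga_mult G (a i) (f i)"
proof -
  have "ga_mult G (ga_mult G (a k) (f k)) (f i) = (if k = i then ga_mult G (a i) (f i) else (\<lambda>x. 0))"
    if "k \<le> s" for k
    using that assms idem_idem orthogonal[of k i] by (simp add: ga_mult_assoc ga_zero_def)
  then have "(\<lambda>x. \<Sum>k\<le>s. ga_mult G (ga_mult G (a k) (f k)) (f i) x)
      = (\<lambda>x. \<Sum>k\<le>s. if k = i then ga_mult G (a i) (f i) x else 0)"
    by (intro ext sum.cong) auto
  then show ?thesis using assms by (simp add: ga_mult_sum_left)
qed

lemma mem_block_sum: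
  assumes a: "a \<in> grp_alg G" and i: "i \<le> s"
    and above: "\<And>k. i < k \<Longrightarrow> k \<le> s \<Longrightarrow> ga_mult G a (f k) = (\<lambda>x. 0)"
  shows "a \<in> block_sum G f i"
proof -
  have "a = (\<lambda>x. \<Sum>k\<le>s. ga_mult G a (f k) x)" using a by (rule grp_alg_decomp)
  also have "\<dots> = (\<lambda>x. \<Sum>k\<le>i. ga_mult G a (f k) x)"
  proof (rule ext, rule sum.mono_neutral_right)
    show "{..i} \<subseteq> {..s}" using i by auto
    show "\<forall>k\<in>{..s} - {..i}. ga_mult G a (f k) x = 0" for x using above by auto
  qed simp
  also have "\<dots> = (\<lambda>x. \<Sum>k\<le>i. ga_mult G (f k) a x)"
    using i a by (intro ext sum.cong) (simp_all add: idem_commute)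
  finally show ?thesis
    unfolding block_sum_def block_def using a
    by (intro CollectI exI[of _ "\<lambda>k. ga_mult G (f k) a"]) blast
qed

end

locale group_code = central_idempotent_decomposition G f s
  for G :: "('g, 'b) monoid_scheme" (structure) and f :: "nat \<Rightarrow> 'g \<Rightarrow> 'k::field" and s +
  fixes l :: nat and C :: "(nat \<Rightarrow> 'g \<Rightarrow> 'k) set"
  assumes submodule: "right_submodule G l (grp_alg G) (grp_alg G) C"
begin

definition component :: "nat \<Rightarrow> (nat \<Rightarrow> 'g \<Rightarrow> 'k) set" where
  "component i = (\<lambda>c. tup_rmult G c (f i)) ` C"

lemma code_in_grp_alg: "c \<in> C \<Longrightarrow> c j \<in> grp_alg G"
  using submodule by (cases "j < l") (auto simp: right_submodule_def tuples_def grp_alg_def)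

lemma code_vanishes: "c \<in> C \<Longrightarrow> l \<le> j \<Longrightarrow> c j = (\<lambda>x. 0)"
  using submodule by (auto simp: right_submodule_def tuples_def)

lemma code_decomp: "c \<in> C \<Longrightarrow> c = (\<lambda>j x. \<Sum>i\<le>s. tup_rmult G c (f i) j x)"
  using grp_alg_decomp[OF code_in_grp_alg] by (auto simp: tup_rmult_def fun_eq_iff)

lemma sum_of_components_in_code:
  "(\<And>i. i \<le> s \<Longrightarrow> c i \<in> C) \<Longrightarrow> (\<lambda>j x. \<Sum>i\<le>s. tup_rmult G (c i) (f i) j x) \<in> C"
  using submodule idem_in_grp_alg
  by (intro right_submodule_sum_closed[OF submodule]) (auto simp: right_submodule_def)

lemma component_submodule:
  assumes i: "i \<le> s"
  shows "right_submodule G l (block G (f i)) (block G (f i)) (component i)"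
  unfolding right_submodule_def
proof (intro conjI ballI)
  show "component i \<subseteq> tuples l (block G (f i))"
  proof
    fix t assume "t \<in> component i"
    then obtain c where c: "c \<in> C" "t = tup_rmult G c (f i)" by (auto simp: component_def)
    then have "t j = ga_mult G (f i) (c j)" for j
      using idem_commute[OF i code_in_grp_alg] by (simp add: tup_rmult_def)
    then show "t \<in> tuples l (block G (f i))"
      using c code_in_grp_alg code_vanishes by (auto simp: tuples_def block_def tup_rmult_def)
  qed
  have "tup_rmult G tup_zero (f i) = tup_zero" by (simp add: tup_rmult_def tup_zero_def)
  then show "tup_zero \<in> component i"
    using submodule unfolding component_def right_submodule_def by (metis image_eqI)
next
  fix t t' assume "t \<in> component i" "t' \<in> component i"
  then obtain c c' where c: "c \<in> C" "c' \<in> C" "t = tup_rmult G c (f i)" "t' = tup_rmult G c' (f i)"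
    by (auto simp: component_def)
  then have "tup_add t t' = tup_rmult G (tup_add c c') (f i)"
    by (simp add: tup_add_def tup_rmult_def ga_mult_add_left)
  then show "tup_add t t' \<in> component i"
    using submodule c unfolding component_def right_submodule_def by blast
next
  fix t a assume "t \<in> component i" and a: "a \<in> block G (f i)"
  then obtain c where c: "c \<in> C" "t = tup_rmult G c (f i)" by (auto simp: component_def)
  have a_alg: "a \<in> grp_alg G" using a ga_mult_in_grp_alg by (auto simp: block_def)
  then have "tup_rmult G t a = tup_rmult G (tup_rmult G c a) (f i)"
    using c idem_commute[OF i] by (simp add: tup_rmult_def ga_mult_assoc)
  then show "tup_rmult G t a \<in> component i"
    using submodule c a_alg unfolding component_def right_submodule_def by blast
qed

lemma component_preimages:
  assumes "\<forall>i\<le>s. w i \<in> phi_l m e l ` component i"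
  obtains c where "\<And>i. i \<le> s \<Longrightarrow> c i \<in> C"
    and "\<And>i. i \<le> s \<Longrightarrow> w i = phi_l m e l (tup_rmult G (c i) (f i))"
proof -
  have "\<forall>i. \<exists>c. i \<le> s \<longrightarrow> c \<in> C \<and> w i = phi_l m e l (tup_rmult G c (f i))"
    using assms by (auto simp: component_def)
  then obtain c where "\<forall>i. i \<le> s \<longrightarrow> c i \<in> C \<and> w i = phi_l m e l (tup_rmult G (c i) (f i))"
    by (rule choice_iff[THEN iffD1, THEN exE])
  then show ?thesis using that by blast
qed

lemma phi_l_code_eq_sum:
  "phi_l m e l ` C = {(\<lambda>p. \<Sum>i\<le>s. w i p) | w. \<forall>i\<le>s. w i \<in> phi_l m e l ` component i}"
proof (intro equalityI subsetI)
  fix v assume "v \<in> phi_l m e l ` C"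
  then obtain c where c: "c \<in> C" "v = phi_l m e l c" by blast
  have "v = phi_l m e l (\<lambda>j x. \<Sum>i\<le>s. tup_rmult G c (f i) j x)"
    unfolding c(2) by (rule arg_cong[OF code_decomp[OF c(1)]])
  also have "\<dots> = (\<lambda>p. \<Sum>i\<le>s. phi_l m e l (tup_rmult G c (f i)) p)" by (rule phi_l_sum)
  finally have "v = (\<lambda>p. \<Sum>i\<le>s. phi_l m e l (tup_rmult G c (f i)) p)" .
  moreover have "\<forall>i\<le>s. phi_l m e l (tup_rmult G c (f i)) \<in> phi_l m e l ` component i"
    using c(1) by (auto simp: component_def)
  ultimately show "v \<in> {(\<lambda>p. \<Sum>i\<le>s. w i p) | w. \<forall>i\<le>s. w i \<in> phi_l m e l ` component i}"
    by (intro CollectI exI[of _ "\<lambda>i. phi_l m e l (tup_rmult G c (f i))"]) simp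
next
  fix v assume "v \<in> {(\<lambda>p. \<Sum>i\<le>s. w i p) | w. \<forall>i\<le>s. w i \<in> phi_l m e l ` component i}"
  then obtain w where v: "v = (\<lambda>p. \<Sum>i\<le>s. w i p)"
    and w: "\<forall>i\<le>s. w i \<in> phi_l m e l ` component i" by blast
  obtain c where c: "\<And>i. i \<le> s \<Longrightarrow> c i \<in> C"
    and wc: "\<And>i. i \<le> s \<Longrightarrow> w i = phi_l m e l (tup_rmult G (c i) (f i))"
    using component_preimages[OF w] by blast
  have "v = phi_l m e l (\<lambda>j x. \<Sum>i\<le>s. tup_rmult G (c i) (f i) j x)"
    using v wc by (simp add: phi_l_sum)
  then show "v \<in> phi_l m e l ` C" using sum_of_components_in_code[OF c] by (rule image_eqI)
qed

lemma component_unique: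
  assumes e: "bij_betw e {..<m} (carrier G)"
    and c: "\<And>i. i \<le> s \<Longrightarrow> c i \<in> C" and c': "\<And>i. i \<le> s \<Longrightarrow> c' i \<in> C"
    and eq: "phi_l m e l (\<lambda>j x. \<Sum>i\<le>s. tup_rmult G (c i) (f i) j x)
           = phi_l m e l (\<lambda>j x. \<Sum>i\<le>s. tup_rmult G (c' i) (f i) j x)"
    and i: "i \<le> s"
  shows "phi_l m e l (tup_rmult G (c i) (f i)) = phi_l m e l (tup_rmult G (c' i) (f i))"
proof (rule phi_l_cong)
  fix j assume j: "j < l"
  have "(\<lambda>x. \<Sum>k\<le>s. tup_rmult G (c k) (f k) j x) = (\<lambda>x. \<Sum>k\<le>s. tup_rmult G (c' k) (f k) j x)"
    using phi_l_eqD[OF e code_in_grp_alg[OF sum_of_components_in_code[OF c]]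
      code_in_grp_alg[OF sum_of_components_in_code[OF c']] eq j] .
  then have "ga_mult G (\<lambda>x. \<Sum>k\<le>s. ga_mult G (c k j) (f k) x) (f i)
      = ga_mult G (\<lambda>x. \<Sum>k\<le>s. ga_mult G (c' k j) (f k) x) (f i)"
    by (simp add: tup_rmult_def)
  then show "tup_rmult G (c i) (f i) j = tup_rmult G (c' i) (f i) j"
    by (simp add: mult_idem_decomp[OF i] tup_rmult_def)
qed

theorem code_direct_sum:
  assumes e: "bij_betw e {..<m} (carrier G)"
  shows "is_direct_sum (phi_l m e l ` C) s (\<lambda>i. phi_l m e l ` component i)"
  unfolding is_direct_sum_def
proof (intro conjI allI impI)
  show "phi_l m e l ` C = {(\<lambda>p. \<Sum>i\<le>s. w i p) | w. \<forall>i\<le>s. w i \<in> phi_l m e l ` component i}"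
    by (rule phi_l_code_eq_sum)
  fix w w' i
  assume h: "(\<forall>i\<le>s. w i \<in> phi_l m e l ` component i \<and> w' i \<in> phi_l m e l ` component i)
    \<and> (\<lambda>p. \<Sum>i\<le>s. w i p) = (\<lambda>p. \<Sum>i\<le>s. w' i p)" and i: "i \<le> s"
  obtain c where c: "\<And>i. i \<le> s \<Longrightarrow> c i \<in> C"
    and wc: "\<And>i. i \<le> s \<Longrightarrow> w i = phi_l m e l (tup_rmult G (c i) (f i))"
    using component_preimages h by metis
  obtain c' where c': "\<And>i. i \<le> s \<Longrightarrow> c' i \<in> C"
    and wc': "\<And>i. i \<le> s \<Longrightarrow> w' i = phi_l m e l (tup_rmult G (c' i) (f i))"
    using component_preimages h by metis
  have "phi_l m e l (\<lambda>j x. \<Sum>i\<le>s. tup_rmult G (c i) (f i) j x)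
      = phi_l m e l (\<lambda>j x. \<Sum>i\<le>s. tup_rmult G (c' i) (f i) j x)"
    using h wc wc' by (simp add: phi_l_sum)
  then show "w i = w' i" using component_unique[OF e c c' _ i] wc[OF i] wc'[OF i] by simp
qed

lemma highest_nonzero_component:
  assumes c: "c \<in> C" "c \<noteq> tup_zero"
  obtains i where "i \<le> s" "tup_rmult G c (f i) \<noteq> tup_zero"
    and "\<And>k. i < k \<Longrightarrow> k \<le> s \<Longrightarrow> tup_rmult G c (f k) = tup_zero"
proof -
  define K where "K = {k. k \<le> s \<and> tup_rmult G c (f k) \<noteq> tup_zero}"
  have "K \<noteq> {}"
  proof
    assume "K = {}"
    then have "tup_rmult G c (f k) = tup_zero" if "k \<le> s" for k
      using that unfolding K_def by blast
    then have zero: "tup_rmult G c (f k) j x = 0" if "k \<le> s" for k j x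
      using that by (simp add: tup_zero_def)
    have "c = (\<lambda>j x. \<Sum>k\<le>s. tup_rmult G c (f k) j x)" by (rule code_decomp[OF c(1)])
    also have "\<dots> = tup_zero"
      unfolding tup_zero_def using zero by (intro ext sum.neutral) simp
    finally show False using c(2) by contradiction
  qed
  moreover have "finite K" by (simp add: K_def)
  ultimately have max: "Max K \<in> K" "\<And>k. k \<in> K \<Longrightarrow> k \<le> Max K" by simp_all
  show ?thesis
  proof (rule that)
    show "Max K \<le> s" "tup_rmult G c (f (Max K)) \<noteq> tup_zero" using max(1) unfolding K_def by blast+
    show "tup_rmult G c (f k) = tup_zero" if "Max K < k" "k \<le> s" for k
    proof (rule ccontr)
      assume "tup_rmult G c (f k) \<noteq> tup_zero"
      then have "k \<in> K" using that(2) unfolding K_def by blast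
      then show False using max(2) that(1) by (meson not_le)
    qed
  qed
qed

lemma hweight_lower_bound:
  assumes e: "bij_betw e {..<m} (carrier G)" and c: "c \<in> C" "c \<noteq> tup_zero"
  obtains i where "i \<le> s" and "ring_code_dist l (component i) * min_dist (phi m e ` block_sum G f i)
      \<le> enat (hweight (phi_l m e l c))"
proof -
  obtain i where i: "i \<le> s" "tup_rmult G c (f i) \<noteq> tup_zero"
    and above: "\<And>k. i < k \<Longrightarrow> k \<le> s \<Longrightarrow> tup_rmult G c (f k) = tup_zero"
    using highest_nonzero_component[OF c] by blast
  define J where "J = {j. j < l \<and> tup_rmult G c (f i) j \<noteq> (\<lambda>x. 0)}"
  define D where "D = min_dist (phi m e ` block_sum G f i)"
  have "c j \<in> block_sum G f i" for j
    using mem_block_sum[OF code_in_grp_alg[OF c(1)] i(1)] above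
    by (metis tup_rmult_def tup_zero_def)
  moreover have "c j \<noteq> (\<lambda>x. 0)" if "j \<in> J" for j
    using that by (auto simp: J_def tup_rmult_def)
  ultimately have D_le: "D \<le> enat (hweight (phi m e (c j)))" if "j \<in> J" for j
    unfolding D_def using that phi_nonzero[OF e code_in_grp_alg[OF c(1)]]
    by (intro min_dist_le_hweight) auto
  have "ring_code_dist l (component i) \<le> enat (card J)"
    unfolding J_def using c(1) i(2) by (intro ring_code_dist_le) (auto simp: component_def)
  then have "ring_code_dist l (component i) * D \<le> enat (card J) * D"
    by (rule mult_right_mono) simp
  also have "\<dots> \<le> enat (\<Sum>j\<in>J. hweight (phi m e (c j)))"
    by (rule enat_card_mult_le_sum) (use D_le in \<open>auto simp: J_def\<close>)
  also have "\<dots> \<le> enat (\<Sum>j<l. hweight (phi m e (c j)))"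
    unfolding enat_ord_simps by (rule sum_mono2) (auto simp: J_def)
  also have "\<dots> = enat (hweight (phi_l m e l c))" by (simp add: hweight_phi_l)
  finally show ?thesis using that i(1) unfolding D_def by blast
qed

theorem min_dist_code_ge:
  assumes e: "bij_betw e {..<m} (carrier G)"
  shows "(MIN i\<in>{..s}. ring_code_dist l (component i) * min_dist (phi m e ` block_sum G f i))
    \<le> min_dist (phi_l m e l ` C)"
  unfolding min_dist_def[of "phi_l m e l ` C"]
proof (rule INF_greatest)
  fix v assume "v \<in> phi_l m e l ` C - {\<lambda>p. 0}"
  then obtain c where c: "c \<in> C" "v = phi_l m e l c" "v \<noteq> (\<lambda>p. 0)" by blast
  then have "c \<noteq> tup_zero" by (auto simp: phi_l_def phi_def tup_zero_def)
  then obtain i where "i \<le> s"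
    "ring_code_dist l (component i) * min_dist (phi m e ` block_sum G f i) \<le> enat (hweight v)"
    using hweight_lower_bound[OF e c(1)] c(2) by blast
  then show "(MIN i\<in>{..s}. ring_code_dist l (component i) * min_dist (phi m e ` block_sum G f i))
      \<le> enat (hweight v)"
    by (meson Min_le atMost_iff finite_atMost finite_imageI image_eqI order_trans)
qed

end

theorem theorem4p2:
  fixes G :: "('g, 'b) monoid_scheme"
    and e :: "nat \<Rightarrow> 'g"
    and f :: "nat \<Rightarrow> 'g \<Rightarrow> 'k::{field, finite}"
    and s l :: nat
    and C :: "(nat \<Rightarrow> 'g \<Rightarrow> 'k) set"
  assumes grp: "group G"
    and fin: "finite (carrier G)"
    and ord: "bij_betw e {..<card (carrier G)} (carrier G)"
    and prim: "\<And>i. i \<le> s \<Longrightarrow> primitive_central_idem G (f i)"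
    and orth: "\<And>i j. i \<le> s \<Longrightarrow> j \<le> s \<Longrightarrow> i \<noteq> j \<Longrightarrow> ga_mult G (f i) (f j) = ga_zero"
    and sum1: "(\<lambda>x. \<Sum>i\<le>s. f i x) = ga_one G"
    and l: "l \<ge> 1"
    and CM: "right_submodule G l (grp_alg G) (grp_alg G) C"
  shows
    "(is_direct_sum (phi_l (card (carrier G)) e l ` C) s
        (\<lambda>i. concat_code (card (carrier G)) l (phi (card (carrier G)) e)
               ((\<lambda>c. tup_rmult G c (f i)) ` C))
      \<and> (\<forall>i\<le>s. right_submodule G l (block G (f i)) (block G (f i))
               ((\<lambda>c. tup_rmult G c (f i)) ` C)))
     \<and> ((\<forall>i<s. min_dist (phi (card (carrier G)) e ` block G (f i))
                \<le> min_dist (phi (card (carrier G)) e ` block G (f (Suc i))))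
        \<and> C \<noteq> {tup_zero}
        \<longrightarrow> min_dist (phi_l (card (carrier G)) e l ` C)
            \<ge> (MIN i\<in>{..s}. ring_code_dist l ((\<lambda>c. tup_rmult G c (f i)) ` C)
                   * min_dist (phi (card (carrier G)) e ` block_sum G f i)))"
proof -
  interpret group G by (rule grp)
  interpret group_code G f s l C
    by unfold_locales (use fin prim orth sum1 CM in \<open>auto simp: primitive_central_idem_def\<close>)
  show ?thesis
    using code_direct_sum[OF ord] component_submodule min_dist_code_ge[OF ord]
    unfolding component_def concat_code_phi by blast
qed

end
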